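(* For every $x \in \mathbb{R}^z$ and $\ell \in \mathbb{N}$ there exists a time series $x' \in \mathrm{set}(x)^{z'}$ with $z' \in O\big(2^{|\mathrm{set}(x)|^{(2\ell + 2)}}\big)$ such that $D_{(x,\ell)} = D_{(x',\ell)}$.
   Context: For $x=(x_1,\dots,x_z)\in\mathbb{R}^z$, $\mathrm{set}(x)=\{x_i:1\le i\le z\}$. A traversal between sequences of lengths $z$ and $\ell$ is a sequence of index pairs from $(1,1)$ to $(z,\ell)$ where each step increases each index by $0$ or $1$ and at least one index by $1$; $\mathcal{T}_{z,\ell}$ is the set of traversals. For $T\in\mathcal{T}_{z,\ell}$, the traversal sectors are $S_j^{(x,T)}=\{x_i:(i,j)\in T\}$ for $j\in[\ell]$, and the $\ell$-profile of $(x,T)$ is $\big((\min S_j^{(x,T)},\max S_j^{(x,T)})\big)_{j=1}^{\ell}$. $D_{(x,\ell)}$ is the set of all $\ell$-profiles of $(x,T)$ over $T\in\mathcal{T}_{z,\ell}$ (for $x'\in\mathbb{R}^{z'}$, over $T\in\mathcal{T}_{z',\ell}$). *)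

theory Defs
  imports Complex_Main
begin

(* Sequences x = (x_1,...,x_z) are lists of length z; list positions are 0-based,
   so index pair (i,j) in the paper corresponds to (i-1,j-1) here. *)

definition trav_step :: "nat \<times> nat \<Rightarrow> nat \<times> nat \<Rightarrow> bool" where
  "trav_step p q \<longleftrightarrow>
     (fst q = fst p \<or> fst q = Suc (fst p)) \<and>
     (snd q = snd p \<or> snd q = Suc (snd p)) \<and> q \<noteq> p"

definition traversal :: "nat \<Rightarrow> nat \<Rightarrow> (nat \<times> nat) list \<Rightarrow> bool" where
  "traversal z l T \<longleftrightarrow> T \<noteq> [] \<and> hd T = (0, 0) \<and> last T = (z - 1, l - 1) \<and>
     (\<forall>k. Suc k < length T \<longrightarrow> trav_step (T ! k) (T ! Suc k))"

definition sector :: "real list \<Rightarrow> (nat \<times> nat) list \<Rightarrow> nat \<Rightarrow> real set" where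
  "sector x T j = {x ! i | i. (i, j) \<in> set T}"

definition profile :: "real list \<Rightarrow> nat \<Rightarrow> (nat \<times> nat) list \<Rightarrow> (real \<times> real) list" where
  "profile x l T = map (\<lambda>j. (Min (sector x T j), Max (sector x T j))) [0..<l]"

definition profiles :: "real list \<Rightarrow> nat \<Rightarrow> (real \<times> real) list set" where
  "profiles x l = {profile x l T | T. traversal (length x) l T}"

end

theory Submission
  imports Defs
begin

text \<open>
  Read x from left to right. For a prefix xs, call the profiles of traversals of xs that end at
  the last element of xs and have at most l sectors the type of xs. Appending an element c
  to xs can only widen the last sector by c or open new sectors (c, c), so the type of
  xs @ [c] depends only on the type of xs and on c; the type of x itself determines
  D_(x,l). Hence if two prefixes of x have the same type, the segment between them can be cut
  out, and after finitely many cuts all prefixes have different types. A type is a set of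
  lists of length at most l over set(x) \<times> set(x), and for n = |set(x)| \<ge> 2 there are fewer
  than n^(2l+2) such lists, so at most 2^(n^(2l+2)) prefixes remain.
\<close>

section \<open>Partial traversals and their sectors\<close>

inductive partial_traversal :: "(nat \<times> nat) list \<Rightarrow> bool" where
  origin: "partial_traversal [(0, 0)]"
| snoc: "partial_traversal T \<Longrightarrow> trav_step (last T) q \<Longrightarrow> partial_traversal (T @ [q])"

lemma traversal_iff_partial_traversal:
  "traversal z l T \<longleftrightarrow> partial_traversal T \<and> last T = (z - 1, l - 1)"
proof -
  have "partial_traversal T \<longleftrightarrow> T \<noteq> [] \<and> hd T = (0, 0) \<and> successively trav_step T"
  proof
    assume "partial_traversal T"
    then show "T \<noteq> [] \<and> hd T = (0, 0) \<and> successively trav_step T"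
      by (induction rule: partial_traversal.induct) (auto simp: successively_append_iff)
  next
    assume "T \<noteq> [] \<and> hd T = (0, 0) \<and> successively trav_step T"
    then show "partial_traversal T"
    proof (induction T rule: rev_induct)
      case (snoc q T)
      then show ?case
        by (cases "T = []") (auto simp: successively_append_iff intro: partial_traversal.intros)
    qed simp
  qed
  then show ?thesis
    by (auto simp: traversal_def successively_conv_nth)
qed

lemma trav_step_cases:
  assumes "trav_step (i, j) q"
  obtains (next_sector) "q = (i, Suc j)" | (next_element) "q = (Suc i, j)"
    | (next_both) "q = (Suc i, Suc j)"
  using assms by (cases q) (auto simp: trav_step_def)

lemma partial_traversal_le_last:
  "partial_traversal T \<Longrightarrow> (i, j) \<in> set T \<Longrightarrow> i \<le> fst (last T) \<and> j \<le> snd (last T)"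
  by (induction rule: partial_traversal.induct) (auto simp: trav_step_def)

lemma partial_traversal_covers:
  "partial_traversal T \<Longrightarrow> j \<le> snd (last T) \<Longrightarrow> \<exists>i. (i, j) \<in> set T"
proof (induction arbitrary: j rule: partial_traversal.induct)
  case (snoc T q)
  then show ?case
  proof (cases "j \<le> snd (last T)")
    case False
    with snoc.hyps(2) snoc.prems have "j = snd q"
      by (auto simp: trav_step_def)
    then show ?thesis
      by (cases q) auto
  qed (use snoc.IH in auto)
qed simp

lemma sector_snoc:
  "sector x (T @ [(i, j')]) j = (if j' = j then insert (x ! i) (sector x T j) else sector x T j)"
  by (auto simp: sector_def)

lemma finite_sector: "finite (sector x T j)"
proof -
  have "sector x T j \<subseteq> (\<lambda>p. x ! fst p) ` set T"
    by (force simp: sector_def)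
  then show ?thesis
    by (rule finite_subset) simp
qed

lemma sector_nonempty: "partial_traversal T \<Longrightarrow> j \<le> snd (last T) \<Longrightarrow> sector x T j \<noteq> {}"
  using partial_traversal_covers by (force simp: sector_def)

lemma sector_empty: "partial_traversal T \<Longrightarrow> snd (last T) < j \<Longrightarrow> sector x T j = {}"
  using partial_traversal_le_last by (force simp: sector_def)

lemma profile_Suc:
  "profile x (Suc m) T = profile x m T @ [(Min (sector x T m), Max (sector x T m))]"
  by (simp add: profile_def)

lemma profile_append_right:
  assumes "partial_traversal T" "fst (last T) < length x"
  shows "profile (x @ y) m T = profile x m T"
proof -
  have "sector (x @ y) T j = sector x T j" for j
    using partial_traversal_le_last[OF assms(1)] assms(2)
    by (fastforce simp: sector_def nth_append)
  then show ?thesis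
    by (simp add: profile_def)
qed

definition widen_last :: "(real \<times> real) list \<Rightarrow> real \<Rightarrow> (real \<times> real) list" where
  "widen_last ps c = butlast ps @ [(min (fst (last ps)) c, max (snd (last ps)) c)]"

lemma widen_last_id:
  "ps \<noteq> [] \<Longrightarrow> fst (last ps) \<le> c \<Longrightarrow> c \<le> snd (last ps) \<Longrightarrow> widen_last ps c = ps"
  by (simp add: widen_last_def min_absorb1 max_absorb1)

lemma profile_snoc_same_sector:
  assumes "partial_traversal T" "snd (last T) = j"
  shows "profile x (Suc j) (T @ [(i, j)]) = widen_last (profile x (Suc j) T) (x ! i)"
proof -
  have "profile x j (T @ [(i, j)]) = profile x j T"
    by (auto simp: profile_def sector_snoc)
  moreover have "sector x T j \<noteq> {}"
    using sector_nonempty assms by simp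
  ultimately show ?thesis
    by (simp add: profile_Suc sector_snoc finite_sector widen_last_def min.commute max.commute)
qed

lemma profile_snoc_new_sector:
  assumes "partial_traversal T" "snd (last T) = j"
  shows "profile x (Suc (Suc j)) (T @ [(i, Suc j)]) = profile x (Suc j) T @ [(x ! i, x ! i)]"
proof -
  have "profile x (Suc j) (T @ [(i, Suc j)]) = profile x (Suc j) T"
    by (auto simp: profile_def sector_snoc)
  moreover have "sector x (T @ [(i, Suc j)]) (Suc j) = {x ! i}"
    using sector_empty[OF assms(1)] assms(2) by (simp add: sector_snoc)
  ultimately show ?thesis
    by (simp only: profile_Suc[of x "Suc j" "T @ [(i, Suc j)]"]) simp
qed

section \<open>Partial profiles\<close>

text \<open>
  \<open>partial_profile xs ps\<close> holds iff ps is the profile of a partial traversal of xs ending at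
  (length xs - 1, length ps - 1); the last three rules correspond to the three possible last
  steps of that traversal.
\<close>

inductive partial_profile :: "real list \<Rightarrow> (real \<times> real) list \<Rightarrow> bool" where
  start: "partial_profile [a] [(a, a)]"
| next_sector: "partial_profile xs ps \<Longrightarrow> partial_profile xs (ps @ [(last xs, last xs)])"
| next_element: "partial_profile xs ps \<Longrightarrow> partial_profile (xs @ [c]) (widen_last ps c)"
| next_both: "partial_profile xs ps \<Longrightarrow> partial_profile (xs @ [c]) (ps @ [(c, c)])"

lemma partial_profile_nonempty: "partial_profile xs ps \<Longrightarrow> xs \<noteq> [] \<and> ps \<noteq> []"
  by (induction rule: partial_profile.induct) (auto simp: widen_last_def)

lemma partial_profile_last_bounds:
  "partial_profile xs ps \<Longrightarrow> fst (last ps) \<le> last xs \<and> last xs \<le> snd (last ps)"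
  by (induction rule: partial_profile.induct) (auto simp: widen_last_def)

lemma partial_profile_set: "partial_profile xs ps \<Longrightarrow> set ps \<subseteq> set xs \<times> set xs"
proof (induction rule: partial_profile.induct)
  case (next_element xs ps c)
  then have "last ps \<in> set xs \<times> set xs"
    using partial_profile_nonempty by auto
  with next_element.IH show ?case
    by (auto simp: widen_last_def min_def max_def dest: in_set_butlastD)
qed (auto dest: partial_profile_nonempty)

lemma partial_profile_profile:
  assumes "partial_traversal T" "fst (last T) < length x"
  shows "partial_profile (take (Suc (fst (last T))) x) (profile x (Suc (snd (last T))) T)"
  using assms
proof (induction rule: partial_traversal.induct)
  case origin
  then show ?case
    by (cases x) (auto simp: profile_def sector_def intro: partial_profile.start)
next
  case (snoc T q)
  obtain i j where last_T: "last T = (i, j)"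
    by fastforce
  from snoc.hyps(2)[unfolded last_T] show ?case
  proof (cases rule: trav_step_cases)
    case next_sector
    with snoc last_T have "partial_profile (take (Suc i) x) (profile x (Suc j) T)"
      by simp
    moreover have "last (take (Suc i) x) = x ! i"
      using snoc.prems next_sector by (simp add: take_Suc_conv_app_nth)
    ultimately have "partial_profile (take (Suc i) x) (profile x (Suc j) T @ [(x ! i, x ! i)])"
      by (metis partial_profile.next_sector)
    then show ?thesis
      using profile_snoc_new_sector[OF snoc.hyps(1)] last_T next_sector by simp
  next
    case next_element
    with snoc last_T have "partial_profile (take (Suc i) x) (profile x (Suc j) T)"
      by simp
    moreover have "take (Suc (Suc i)) x = take (Suc i) x @ [x ! Suc i]"
      using snoc.prems next_element by (simp add: take_Suc_conv_app_nth)
    ultimately have "partial_profile (take (Suc (Suc i)) x) (widen_last (profile x (Suc j) T) (x ! Suc i))"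
      by (metis partial_profile.next_element)
    then show ?thesis
      using profile_snoc_same_sector[OF snoc.hyps(1)] last_T next_element by simp
  next
    case next_both
    with snoc last_T have "partial_profile (take (Suc i) x) (profile x (Suc j) T)"
      by simp
    moreover have "take (Suc (Suc i)) x = take (Suc i) x @ [x ! Suc i]"
      using snoc.prems next_both by (simp add: take_Suc_conv_app_nth)
    ultimately have "partial_profile (take (Suc (Suc i)) x) (profile x (Suc j) T @ [(x ! Suc i, x ! Suc i)])"
      by (metis partial_profile.next_both)
    then show ?thesis
      using profile_snoc_new_sector[OF snoc.hyps(1)] last_T next_both by simp
  qed
qed

lemma partial_profile_traversal:
  "partial_profile xs ps \<Longrightarrow>
    \<exists>T. partial_traversal T \<and> last T = (length xs - 1, length ps - 1) \<and> profile xs (length ps) T = ps"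
proof (induction rule: partial_profile.induct)
  case (start a)
  have "profile [a] 1 [(0, 0)] = [(a, a)]"
    by (simp add: profile_def sector_def)
  then show ?case
    using partial_traversal.origin by fastforce
next
  case (next_sector xs ps)
  then obtain T m n where T: "partial_traversal T" "last T = (m, n)" "profile xs (Suc n) T = ps"
    and lengths: "length xs = Suc m" "length ps = Suc n"
    using partial_profile_nonempty by (cases xs; cases ps) auto
  moreover have "last xs = xs ! m"
    using lengths by (cases xs rule: rev_cases) auto
  ultimately have "partial_traversal (T @ [(m, Suc n)])"
    "profile xs (Suc (Suc n)) (T @ [(m, Suc n)]) = ps @ [(last xs, last xs)]"
    using profile_snoc_new_sector[OF T(1)]
    by (auto intro: partial_traversal.snoc simp: trav_step_def)
  with lengths show ?case
    by fastforce
next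
  case (next_element xs ps c)
  then obtain T m n where T: "partial_traversal T" "last T = (m, n)" "profile xs (Suc n) T = ps"
    and lengths: "length xs = Suc m" "length ps = Suc n"
    using partial_profile_nonempty by (cases xs; cases ps) auto
  then have "partial_traversal (T @ [(Suc m, n)])"
    "profile (xs @ [c]) (Suc n) (T @ [(Suc m, n)]) = widen_last ps c"
    using profile_append_right[of T xs "[c]"] profile_snoc_same_sector[OF T(1)]
    by (auto intro: partial_traversal.snoc simp: trav_step_def nth_append)
  with lengths show ?case
    by (fastforce simp: widen_last_def)
next
  case (next_both xs ps c)
  then obtain T m n where T: "partial_traversal T" "last T = (m, n)" "profile xs (Suc n) T = ps"
    and lengths: "length xs = Suc m" "length ps = Suc n"
    using partial_profile_nonempty by (cases xs; cases ps) auto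
  then have "partial_traversal (T @ [(Suc m, Suc n)])"
    "profile (xs @ [c]) (Suc (Suc n)) (T @ [(Suc m, Suc n)]) = ps @ [(c, c)]"
    using profile_append_right[of T xs "[c]"] profile_snoc_new_sector[OF T(1)]
    by (auto intro: partial_traversal.snoc simp: trav_step_def nth_append)
  with lengths show ?case
    by fastforce
qed

lemma profiles_eq_partial_profiles:
  assumes "x \<noteq> []" "1 \<le> l"
  shows "profiles x l = {ps. partial_profile x ps \<and> length ps = l}"
proof (intro set_eqI iffI)
  fix ps
  assume "ps \<in> profiles x l"
  then obtain T where "partial_traversal T" "last T = (length x - 1, l - 1)" "ps = profile x l T"
    by (auto simp: profiles_def traversal_iff_partial_traversal)
  with partial_profile_profile[of T x] assms show "ps \<in> {ps. partial_profile x ps \<and> length ps = l}"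
    by (simp add: profile_def)
next
  fix ps
  assume "ps \<in> {ps. partial_profile x ps \<and> length ps = l}"
  then obtain T where "partial_traversal T" "last T = (length x - 1, l - 1)" "ps = profile x l T"
    using partial_profile_traversal by force
  then show "ps \<in> profiles x l"
    by (auto simp: profiles_def traversal_iff_partial_traversal)
qed

definition extensions :: "real \<Rightarrow> (real \<times> real) list \<Rightarrow> (real \<times> real) list set" where
  "extensions c ps =
     {qs. \<exists>k. qs = widen_last ps c @ replicate k (c, c) \<or> qs = ps @ replicate (Suc k) (c, c)}"

lemma widen_last_in_extensions: "widen_last ps c \<in> extensions c ps"
proof -
  have "widen_last ps c = widen_last ps c @ replicate 0 (c, c)"
    by simp
  then show ?thesis
    unfolding extensions_def by blast
qed

lemma snoc_in_extensions: "ps @ [(c, c)] \<in> extensions c ps"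
proof -
  have "ps @ [(c, c)] = ps @ replicate (Suc 0) (c, c)"
    by simp
  then show ?thesis
    unfolding extensions_def by blast
qed

lemma extensions_snoc:
  assumes "qs \<in> extensions c ps"
  shows "qs @ [(c, c)] \<in> extensions c ps"
proof -
  obtain k where "qs = widen_last ps c @ replicate k (c, c) \<or> qs = ps @ replicate (Suc k) (c, c)"
    using assms by (auto simp: extensions_def)
  then have "qs @ [(c, c)] = widen_last ps c @ replicate (Suc k) (c, c) \<or>
      qs @ [(c, c)] = ps @ replicate (Suc (Suc k)) (c, c)"
    by (auto simp: replicate_append_same)
  then show ?thesis
    unfolding extensions_def by blast
qed

lemma length_extensions: "ps \<noteq> [] \<Longrightarrow> qs \<in> extensions c ps \<Longrightarrow> length ps \<le> length qs"
  by (auto simp: extensions_def widen_last_def)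

lemma partial_profile_append_replicate:
  "partial_profile xs ps \<Longrightarrow> partial_profile xs (ps @ replicate k (last xs, last xs))"
proof (induction k)
  case (Suc k)
  then show ?case
    using partial_profile.next_sector[OF Suc.IH] by (simp add: replicate_append_same)
qed simp

lemma partial_profile_snoc_iff:
  assumes "xs \<noteq> []"
  shows "partial_profile (xs @ [c]) qs \<longleftrightarrow> (\<exists>ps. partial_profile xs ps \<and> qs \<in> extensions c ps)"
proof
  have "partial_profile ys qs \<Longrightarrow> ys = xs @ [c] \<Longrightarrow> \<exists>ps. partial_profile xs ps \<and> qs \<in> extensions c ps"
    for ys
  proof (induction rule: partial_profile.induct)
    case (start a)
    with assms show ?case
      by (cases xs) auto
  next
    case (next_sector ys qs)
    then show ?case
      using extensions_snoc by auto
  next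
    case (next_element ys ps c')
    then show ?case
      using widen_last_in_extensions by auto
  next
    case (next_both ys ps c')
    then show ?case
      using snoc_in_extensions by auto
  qed
  then show "partial_profile (xs @ [c]) qs \<Longrightarrow> \<exists>ps. partial_profile xs ps \<and> qs \<in> extensions c ps"
    by blast
next
  assume "\<exists>ps. partial_profile xs ps \<and> qs \<in> extensions c ps"
  then obtain ps k where ps: "partial_profile xs ps"
    and "qs = widen_last ps c @ replicate k (c, c) \<or> qs = (ps @ [(c, c)]) @ replicate k (c, c)"
    by (auto simp: extensions_def)
  then show "partial_profile (xs @ [c]) qs"
    using partial_profile_append_replicate[of "xs @ [c]" _ k] partial_profile.intros(3,4)[OF ps]
    by (metis last_snoc)
qed

lemma partial_profile_snoc_last_iff:
  assumes "xs \<noteq> []"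
  shows "partial_profile (xs @ [last xs]) ps \<longleftrightarrow> partial_profile xs ps"
proof
  assume "partial_profile (xs @ [last xs]) ps"
  then obtain ps0 k where ps0: "partial_profile xs ps0"
    and "ps = widen_last ps0 (last xs) @ replicate k (last xs, last xs) \<or>
      ps = ps0 @ replicate (Suc k) (last xs, last xs)"
    using partial_profile_snoc_iff[OF assms] by (auto simp: extensions_def)
  moreover have "widen_last ps0 (last xs) = ps0"
    using ps0 partial_profile_nonempty partial_profile_last_bounds widen_last_id by blast
  ultimately show "partial_profile xs ps"
    using partial_profile_append_replicate by metis
next
  assume "partial_profile xs ps"
  moreover have "widen_last ps (last xs) = ps"
    using calculation partial_profile_nonempty partial_profile_last_bounds widen_last_id by blast
  ultimately show "partial_profile (xs @ [last xs]) ps"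
    using partial_profile.next_element by metis
qed

section \<open>Types of prefixes\<close>

definition profile_type :: "nat \<Rightarrow> real list \<Rightarrow> (real \<times> real) list set" where
  "profile_type l xs = {ps. partial_profile xs ps \<and> length ps \<le> l}"

lemma profiles_eq_profile_type:
  "x \<noteq> [] \<Longrightarrow> 1 \<le> l \<Longrightarrow> profiles x l = {ps \<in> profile_type l x. length ps = l}"
  by (auto simp: profiles_eq_partial_profiles profile_type_def)

lemma profile_type_subset:
  "profile_type l xs \<subseteq> {ps. set ps \<subseteq> set xs \<times> set xs \<and> length ps \<le> l}"
  using partial_profile_set by (auto simp: profile_type_def)

lemma profile_type_snoc:
  assumes "xs \<noteq> []"
  shows "profile_type l (xs @ [c]) = {qs \<in> \<Union> (extensions c ` profile_type l xs). length qs \<le> l}"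
proof (intro set_eqI iffI)
  fix qs
  assume "qs \<in> profile_type l (xs @ [c])"
  then obtain ps where ps: "partial_profile xs ps" "qs \<in> extensions c ps" "length qs \<le> l"
    by (auto simp: profile_type_def partial_profile_snoc_iff[OF assms])
  then have "length ps \<le> l"
    using length_extensions partial_profile_nonempty le_trans by blast
  with ps show "qs \<in> {qs \<in> \<Union> (extensions c ` profile_type l xs). length qs \<le> l}"
    by (auto simp: profile_type_def)
next
  fix qs
  assume "qs \<in> {qs \<in> \<Union> (extensions c ` profile_type l xs). length qs \<le> l}"
  then show "qs \<in> profile_type l (xs @ [c])"
    by (auto simp: profile_type_def partial_profile_snoc_iff[OF assms])
qed

lemma profile_type_append_cong:
  assumes "xs \<noteq> []" "ys \<noteq> []" "profile_type l xs = profile_type l ys"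
  shows "profile_type l (xs @ zs) = profile_type l (ys @ zs)"
proof (induction zs rule: rev_induct)
  case (snoc c zs)
  with assms show ?case
    using profile_type_snoc[of "xs @ zs"] profile_type_snoc[of "ys @ zs"] by simp
qed (use assms in simp)

lemma right_congruence_prefix_inj_representative:
  fixes f :: "'a list \<Rightarrow> 'b"
  assumes right_cong: "\<And>xs ys zs. xs \<noteq> [] \<Longrightarrow> ys \<noteq> [] \<Longrightarrow> f xs = f ys \<Longrightarrow> f (xs @ zs) = f (ys @ zs)"
    and "xs \<noteq> []"
  obtains ys where "ys \<noteq> []" "set ys \<subseteq> set xs" "f ys = f xs"
    "inj_on (\<lambda>p. f (take p ys)) {1..length ys}"
  using assms(2)
proof (induction "length xs" arbitrary: xs rule: less_induct)
  case less
  show ?case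
  proof (cases "inj_on (\<lambda>p. f (take p xs)) {1..length xs}")
    case True
    with less.prems show ?thesis
      by blast
  next
    case False
    then obtain p q where pq: "1 \<le> p" "p < q" "q \<le> length xs" "f (take p xs) = f (take q xs)"
      unfolding inj_on_def by (metis atLeastAtMost_iff linorder_neqE_nat)
    define xs' where "xs' = take p xs @ drop q xs"
    have "f xs' = f (take q xs @ drop q xs)"
      unfolding xs'_def using pq less.prems(2) by (intro right_cong) auto
    moreover have "set xs' \<subseteq> set xs"
      unfolding xs'_def using set_take_subset set_drop_subset by fastforce
    moreover have "length xs' < length xs" "xs' \<noteq> []"
      unfolding xs'_def using pq less.prems(2) by auto
    ultimately show ?thesis
      using less.hyps less.prems(1) by (metis append_take_drop_id order_trans)
  qed
qed

section \<open>Counting types\<close>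

lemma sum_powers_less: "2 \<le> (q::nat) \<Longrightarrow> (\<Sum>i\<le>l. q ^ i) < q ^ Suc l"
proof (induction l)
  case (Suc l)
  have "(\<Sum>i\<le>Suc l. q ^ i) < 2 * q ^ Suc l"
    using Suc by simp
  also have "\<dots> \<le> q * q ^ Suc l"
    using Suc.prems by (intro mult_right_mono) auto
  finally show ?case
    by simp
qed simp

lemma length_le_if_prefix_types_inj_card_ge_2:
  assumes inj: "inj_on (\<lambda>p. profile_type l (take p ys)) {1..length ys}"
    and "set ys \<subseteq> S" "finite S" "2 \<le> card S"
  shows "length ys \<le> 2 ^ (card S ^ (2 * l + 2))"
proof -
  define n where "n = card S"
  define U where "U = {ps. set ps \<subseteq> S \<times> S \<and> length ps \<le> l}"
  have "finite U"
    unfolding U_def using assms(3) by (simp add: finite_lists_length_le)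
  have "profile_type l (take p ys) \<subseteq> U" for p
    using profile_type_subset[of l "take p ys"] set_take_subset[of p ys] assms(2)
    unfolding U_def by blast
  then have "card {1..length ys} \<le> card (Pow U)"
    using \<open>finite U\<close> by (intro card_inj_on_le[OF inj]) auto
  then have length_ys: "length ys \<le> 2 ^ card U"
    using \<open>finite U\<close> by (simp add: card_Pow)
  have "card U = (\<Sum>i\<le>l. (n * n) ^ i)"
    unfolding U_def n_def using assms(3) by (simp add: card_lists_length_le card_cartesian_product)
  also have "\<dots> < (n * n) ^ Suc l"
    using assms(4) le_square order_trans unfolding n_def by (blast intro: sum_powers_less)
  also have "\<dots> = (n ^ 2) ^ Suc l"
    by (simp only: power2_eq_square)
  also have "\<dots> = n ^ (2 * Suc l)"
    by (rule power_mult[symmetric])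
  finally have "card U \<le> n ^ (2 * l + 2)"
    by (simp del: power_Suc)
  with length_ys show ?thesis
    unfolding n_def by (meson le_trans one_le_numeral power_increasing)
qed

text \<open>
  For a single value the count of candidate lists, l + 1, exceeds n^(2l+2) = 1; instead,
  repeating the last element never changes the type.
\<close>

lemma length_le_1_if_prefix_types_inj_card_le_1:
  assumes inj: "inj_on (\<lambda>p. profile_type l (take p ys)) {1..length ys}"
    and "card (set ys) \<le> 1"
  shows "length ys \<le> 1"
proof (rule ccontr)
  assume "\<not> length ys \<le> 1"
  then obtain a b zs where ys: "ys = a # b # zs"
    by (cases ys; cases "tl ys") auto
  have "a \<in> set ys" "b \<in> set ys"
    using ys by simp_all
  with assms(2) have "b = a"
    by (auto simp: card_le_Suc0_iff_eq)
  have "profile_type l ([a] @ [last [a]]) = profile_type l [a]"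
    unfolding profile_type_def using partial_profile_snoc_last_iff[of "[a]"] by simp
  with ys \<open>b = a\<close> have "profile_type l (take 2 ys) = profile_type l (take 1 ys)"
    by (simp add: numeral_2_eq_2)
  moreover have "(2::nat) \<in> {1..length ys}" "(1::nat) \<in> {1..length ys}"
    using ys by auto
  ultimately have "(2::nat) = 1"
    by (rule inj_onD[OF inj])
  then show False
    by simp
qed

lemma length_le_if_prefix_types_inj:
  assumes inj: "inj_on (\<lambda>p. profile_type l (take p ys)) {1..length ys}"
    and "set ys \<subseteq> S" "finite S"
  shows "length ys \<le> 2 ^ (card S ^ (2 * l + 2))"
proof (cases "2 \<le> card S")
  case True
  with assms show ?thesis
    by (rule length_le_if_prefix_types_inj_card_ge_2)
next
  case False
  then have "card (set ys) \<le> 1"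
    using card_mono[OF assms(3,2)] by simp
  with inj have "length ys \<le> 1"
    by (rule length_le_1_if_prefix_types_inj_card_le_1)
  then show ?thesis
    using one_le_power[of 2] le_trans by fastforce
qed

theorem lemma9p11:
  shows "\<exists>C::real. \<forall>(x::real list) (l::nat). length x \<ge> 1 \<longrightarrow> l \<ge> 1 \<longrightarrow>
           (\<exists>x'::real list. set x' \<subseteq> set x \<and>
              real (length x') \<le> C * 2 ^ (card (set x) ^ (2 * l + 2)) \<and>
              profiles x l = profiles x' l)"
proof (intro exI[of _ 1] allI impI)
  fix x :: "real list" and l :: nat
  assume "length x \<ge> 1" "l \<ge> 1"
  then have "x \<noteq> []"
    by auto
  then obtain ys where ys: "ys \<noteq> []" "set ys \<subseteq> set x" "profile_type l ys = profile_type l x"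
    and inj: "inj_on (\<lambda>p. profile_type l (take p ys)) {1..length ys}"
    using right_congruence_prefix_inj_representative[of "profile_type l", OF profile_type_append_cong]
    by blast
  have "profiles ys l = profiles x l"
    using profiles_eq_profile_type ys \<open>x \<noteq> []\<close> \<open>l \<ge> 1\<close> by simp
  moreover have "length ys \<le> 2 ^ (card (set x) ^ (2 * l + 2))"
    using length_le_if_prefix_types_inj[OF inj ys(2)] by simp
  ultimately show "\<exists>x'. set x' \<subseteq> set x \<and>
      real (length x') \<le> 1 * 2 ^ (card (set x) ^ (2 * l + 2)) \<and> profiles x l = profiles x' l"
    using ys(2) by (intro exI[of _ ys]) (simp add: of_nat_power_le_of_nat_cancel_iff)
qed

end
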